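(* The inequality $n^{1/2}\le S_s(n)$ holds for almost all positive integers $n$, i.e., the set of $n$ for which it holds has asymptotic density $1$.
   Context: $s(n)=\sigma(n)-n$ is the sum of proper divisors of $n$, and $S_s(n)=\sum_{d\mid n}s(d)$. *)

theory Defs
  imports "HOL-Number_Theory.Number_Theory"
begin

definition aliquot :: "nat \<Rightarrow> nat" where
  "aliquot n = (\<Sum>d | d dvd n \<and> d < n. d)"

definition S_s :: "nat \<Rightarrow> nat" where
  "S_s n = (\<Sum>d | d dvd n. aliquot d)"

definition has_density :: "nat set \<Rightarrow> real \<Rightarrow> bool" where
  "has_density A c \<longleftrightarrow>
     ((\<lambda>x. real (card {n \<in> {1..x}. n \<in> A}) / real x) \<longlonglongrightarrow> c)"

end

theory Submission
  imports Defs
begin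

text \<open>
  A composite \<open>n = a b\<close> has the proper divisor \<open>max a b \<ge> \<surd>n\<close>, which already occurs
  in \<open>s(n) \<le> S\<^sub>s(n)\<close>; so the inequality can only fail at \<open>n = 1\<close> and at primes.
  The primes have density zero by Chebyshev's elementary argument: all primes in \<open>(m, 2m]\<close>
  divide \<open>(2m choose m) \<le> 4\<^sup>m\<close>, so there are at most \<open>m ln 4 / ln m = o(m)\<close> of them,
  and halving \<open>n\<close> repeatedly gives \<open>\<pi>(n) = o(n)\<close>.
\<close>

lemma prod_primes_dvd:
  fixes x :: "'a :: factorial_semiring_multiplicative"
  assumes "x \<noteq> 0" "\<And>p. p \<in> A \<Longrightarrow> prime p \<and> p dvd x"
  shows "\<Prod>A dvd x"
proof -
  have "\<Prod>A dvd (\<Prod>p\<in>prime_factors x. p)"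
    by (rule prod_dvd_prod_subset) (use assms in \<open>auto simp: in_prime_factors_iff\<close>)
  also have "\<dots> dvd (\<Prod>p\<in>prime_factors x. p ^ multiplicity p x)"
    by (rule prod_dvd_prod) (simp add: prime_factors_multiplicity)
  also have "\<dots> = normalize x"
    using assms(1) by (rule prod_prime_factors)
  finally show ?thesis by simp
qed

lemma prime_dvd_central_binomial:
  assumes "prime p" "m < p" "p \<le> 2 * m"
  shows "p dvd (2 * m choose m)"
proof -
  have "fact m * fact (2 * m - m) * (2 * m choose m) = (fact (2 * m) :: nat)"
    by (rule binomial_fact_lemma) simp
  moreover have "p dvd (fact (2 * m) :: nat)"
    using assms prime_dvd_fact_iff by blast
  ultimately have "p dvd fact m * fact m * (2 * m choose m)"
    by simp
  moreover have "\<not> p dvd (fact m :: nat)"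
    using assms prime_dvd_fact_iff by simp
  ultimately show ?thesis
    using assms(1) by (simp add: prime_dvd_mult_iff)
qed

definition primes_between :: "nat \<Rightarrow> nat \<Rightarrow> nat set" where
  "primes_between a b = {p. prime p \<and> a < p \<and> p \<le> b}"

lemma finite_primes_between [simp]: "finite (primes_between a b)"
  unfolding primes_between_def by (rule finite_subset[of _ "{..b}"]) auto

lemma card_primes_between_le: "card (primes_between a b) \<le> b"
proof -
  have "primes_between a b \<subseteq> {1..b}"
    by (auto simp: primes_between_def prime_gt_0_nat Suc_le_eq)
  then show ?thesis
    using card_mono[of "{1..b}"] by fastforce
qed

lemma power_card_primes_between_le: "m ^ card (primes_between m (2 * m)) \<le> 4 ^ m"
proof -
  have "m ^ card (primes_between m (2 * m)) = (\<Prod>p\<in>primes_between m (2 * m). m)"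
    by simp
  also have "\<dots> \<le> \<Prod>(primes_between m (2 * m))"
    by (rule prod_mono) (auto simp: primes_between_def)
  also have "\<dots> \<le> 2 * m choose m"
    by (intro dvd_imp_le prod_primes_dvd)
      (auto simp: primes_between_def intro: prime_dvd_central_binomial)
  also have "\<dots> \<le> 2 ^ (2 * m)"
    by (rule binomial_le_pow2)
  also have "\<dots> = 4 ^ m"
    by (simp add: power_mult)
  finally show ?thesis .
qed

lemma card_primes_between_ln_le:
  assumes "m \<ge> 2"
  shows "card (primes_between m (2 * m)) * ln (real m) \<le> m * ln 4"
proof -
  have "real m ^ card (primes_between m (2 * m)) \<le> 4 ^ m"
    using power_card_primes_between_le[of m] by (metis of_nat_le_iff of_nat_numeral of_nat_power)
  then have "ln (real m ^ card (primes_between m (2 * m))) \<le> ln (4 ^ m)"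
    using assms by (subst ln_le_cancel_iff) auto
  then show ?thesis
    using assms by (simp add: ln_realpow)
qed

lemma eventually_card_primes_between_le:
  fixes e :: real
  assumes "e > 0"
  shows "eventually (\<lambda>m. card (primes_between m (2 * m)) \<le> e * m) sequentially"
proof -
  have "filterlim (\<lambda>m::nat. ln (real m)) at_top sequentially"
    using ln_at_top filterlim_real_sequentially filterlim_compose by blast
  then have "eventually (\<lambda>m::nat. ln (real m) \<ge> ln 4 / e \<and> m \<ge> 2) sequentially"
    by (intro eventually_conj) (auto simp: filterlim_at_top eventually_ge_at_top)
  then show ?thesis
  proof eventually_elim
    case (elim m)
    let ?c = "real (card (primes_between m (2 * m)))"
    have "?c * ln 4 \<le> e * (?c * ln (real m))"
      using elim assms mult_left_mono[of "ln 4 / e" "ln (real m)" ?c]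
      by (simp add: field_simps)
    also have "\<dots> \<le> e * (m * ln 4)"
      using card_primes_between_ln_le[of m] elim assms by (intro mult_left_mono) auto
    finally show "?c \<le> e * m"
      by (simp add: mult.assoc mult.commute[of _ "ln 4"])
  qed
qed

lemma card_primes_upto_halving:
  "card (primes_between 0 n)
     \<le> card (primes_between 0 (n div 2)) + card (primes_between (n div 2) (2 * (n div 2))) + 1"
proof -
  have "primes_between 0 n
          \<subseteq> primes_between 0 (n div 2) \<union> primes_between (n div 2) (2 * (n div 2)) \<union> {n}"
    by (auto simp: primes_between_def)
  then have "card (primes_between 0 n)
               \<le> card (primes_between 0 (n div 2) \<union> primes_between (n div 2) (2 * (n div 2)) \<union> {n})"
    by (intro card_mono) auto
  also have "\<dots> \<le> card (primes_between 0 (n div 2) \<union> primes_between (n div 2) (2 * (n div 2))) + 1"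
    using card_Un_le[of _ "{n}"] by simp
  also have "\<dots> \<le> card (primes_between 0 (n div 2)) + card (primes_between (n div 2) (2 * (n div 2))) + 1"
    using card_Un_le by simp
  finally show ?thesis .
qed

text \<open>
  \<open>K\<close> covers the small \<open>n\<close>; for large \<open>n\<close> the \<open>+1\<close> of the halving step is absorbed
  because \<open>e n > 2\<close>.
\<close>
lemma card_primes_upto_le_linear:
  fixes e :: real
  assumes "e > 0"
  obtains K where "\<And>n. card (primes_between 0 n) \<le> 2 * e * n + K"
proof -
  obtain M where M: "\<And>m. m \<ge> M \<Longrightarrow> card (primes_between m (2 * m)) \<le> e * m"
    using eventually_card_primes_between_le[OF assms] by (auto simp: eventually_sequentially)
  define K where "K = max (2 * M + 2) (nat \<lceil>2 / e\<rceil> + 1)"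
  have "card (primes_between 0 n) \<le> 2 * e * n + K" for n
  proof (induction n rule: less_induct)
    case (less n)
    show ?case
    proof (cases "n < K")
      case True
      then show ?thesis
        using card_primes_between_le[of 0 n] assms by (simp add: add_increasing)
    next
      case False
      define m where "m = n div 2"
      have "m < n" "m \<ge> M" "2 * m \<le> n" "n \<ge> nat \<lceil>2 / e\<rceil> + 1"
        using False by (auto simp: m_def K_def)
      then have "n > 2 / e"
        by linarith
      then have "e * n > 2"
        using assms by (simp add: field_simps)
      have "e * real (2 * m) \<le> e * n"
        using \<open>2 * m \<le> n\<close> assms by (intro mult_left_mono) simp_all
      then have "e * m \<le> e * n / 2"
        by simp
      have "real (card (primes_between 0 n))
              \<le> card (primes_between 0 m) + card (primes_between m (2 * m)) + 1"
        using card_primes_upto_halving[of n] unfolding m_def by linarith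
      also have "\<dots> \<le> (2 * e * m + K) + e * m + 1"
        using less.IH[OF \<open>m < n\<close>] M[OF \<open>m \<ge> M\<close>] by linarith
      also have "\<dots> \<le> 2 * e * n + K"
        using \<open>e * n > 2\<close> \<open>e * m \<le> e * n / 2\<close> by linarith
      finally show ?thesis .
    qed
  qed
  then show ?thesis using that by blast
qed

lemma has_density_primes: "has_density {p. prime p} 0"
proof -
  have count: "card {n \<in> {1..x}. n \<in> {p. prime p}} = card (primes_between 0 x)" for x
    by (rule arg_cong[of _ _ card]) (auto simp: primes_between_def prime_ge_1_nat)
  have "(\<lambda>x. real (card (primes_between 0 x)) / real x) \<longlonglongrightarrow> 0"
  proof (rule LIMSEQ_I)
    fix r :: real
    assume r: "r > 0"
    obtain K where K: "\<And>n. card (primes_between 0 n) \<le> 2 * (r / 4) * n + K"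
      using card_primes_upto_le_linear[of "r / 4"] r by auto
    have "K \<ge> 0"
      using K[of 0] by simp
    have "norm (real (card (primes_between 0 n)) / real n) < r" if "n \<ge> nat \<lceil>4 * K / r\<rceil> + 1" for n
    proof -
      have "real n > 4 * K / r"
        using that by linarith
      then have "K < r / 4 * n"
        using r by (simp add: field_simps)
      moreover have "real n > 0"
        using that by simp
      ultimately show ?thesis
        using K[of n] by (simp add: field_simps)
    qed
    then show "\<exists>N. \<forall>n\<ge>N. norm (real (card (primes_between 0 n)) / real n - 0) < r"
      by auto
  qed
  then show ?thesis
    unfolding has_density_def count .
qed

lemma has_density_insert:
  assumes "has_density E c"
  shows "has_density (insert a E) c"
proof -
  let ?d = "\<lambda>A x. real (card {n \<in> {1..x}. n \<in> A}) / real x"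
  have upper: "?d (insert a E) x \<le> ?d E x + 1 / real x" for x
  proof -
    have "{n \<in> {1..x}. n \<in> insert a E} \<subseteq> insert a {n \<in> {1..x}. n \<in> E}"
      by auto
    then have "card {n \<in> {1..x}. n \<in> insert a E} \<le> card (insert a {n \<in> {1..x}. n \<in> E})"
      by (intro card_mono) auto
    also have "\<dots> \<le> card {n \<in> {1..x}. n \<in> E} + 1"
      by (simp add: card_insert_if)
    finally have "card {n \<in> {1..x}. n \<in> insert a E} \<le> card {n \<in> {1..x}. n \<in> E} + 1" .
    then show ?thesis
      by (simp add: add_divide_distrib[symmetric] divide_right_mono flip: of_nat_Suc)
  qed
  have lower: "?d E x \<le> ?d (insert a E) x" for x
    by (intro divide_right_mono of_nat_mono card_mono) auto
  have "(\<lambda>x. ?d E x + 1 / real x) \<longlonglongrightarrow> c + 0"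
    using assms unfolding has_density_def by (intro tendsto_add lim_1_over_n)
  then have lim: "(\<lambda>x. ?d E x + 1 / real x) \<longlonglongrightarrow> c"
    by simp
  show ?thesis
    unfolding has_density_def
  proof (rule tendsto_sandwich[OF _ _ _ lim])
    show "(?d E) \<longlonglongrightarrow> c"
      using assms unfolding has_density_def .
  qed (use lower upper in simp_all)
qed

lemma has_density_one_if_exceptions_null:
  assumes "has_density E 0" "\<And>n. n \<ge> 1 \<Longrightarrow> n \<notin> E \<Longrightarrow> n \<in> A"
  shows "has_density A 1"
proof -
  let ?d = "\<lambda>A x. real (card {n \<in> {1..x}. n \<in> A}) / real x"
  have lower: "1 - ?d E x \<le> ?d A x" if "x \<ge> 1" for x
  proof -
    have "{1..x} \<subseteq> {n \<in> {1..x}. n \<in> A} \<union> {n \<in> {1..x}. n \<in> E}"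
      using assms(2) by auto
    then have "x \<le> card ({n \<in> {1..x}. n \<in> A} \<union> {n \<in> {1..x}. n \<in> E})"
      using card_mono[of _ "{1..x}"] by fastforce
    also have "\<dots> \<le> card {n \<in> {1..x}. n \<in> A} + card {n \<in> {1..x}. n \<in> E}"
      by (rule card_Un_le)
    finally have "real x - card {n \<in> {1..x}. n \<in> E} \<le> card {n \<in> {1..x}. n \<in> A}"
      by linarith
    then have "(real x - card {n \<in> {1..x}. n \<in> E}) / x \<le> ?d A x"
      by (rule divide_right_mono) simp
    then show ?thesis
      using that by (simp add: diff_divide_distrib)
  qed
  have upper: "?d A x \<le> 1" for x
  proof (cases "x = 0")
    case False
    have "card {n \<in> {1..x}. n \<in> A} \<le> card {1..x}"
      by (intro card_mono) auto
    then show ?thesis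
      using False by simp
  qed simp
  have "(\<lambda>x. 1 - ?d E x) \<longlonglongrightarrow> 1 - 0"
    using assms(1) unfolding has_density_def by (intro tendsto_diff tendsto_const)
  then have lim: "(\<lambda>x. 1 - ?d E x) \<longlonglongrightarrow> 1"
    by simp
  show ?thesis
    unfolding has_density_def
  proof (rule tendsto_sandwich[OF _ _ lim tendsto_const])
    show "eventually (\<lambda>x. 1 - ?d E x \<le> ?d A x) sequentially"
      using lower by (auto simp: eventually_sequentially)
    show "eventually (\<lambda>x. ?d A x \<le> 1) sequentially"
      using upper by simp
  qed
qed

lemma composite_has_large_proper_divisor:
  fixes n :: nat
  assumes "n \<ge> 2" "\<not> prime n"
  obtains d where "d dvd n" "d < n" "n \<le> d ^ 2"
proof -
  obtain a where a: "a dvd n" "a \<noteq> 1" "a \<noteq> n"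
    using assms prime_nat_iff by auto
  then obtain b where n: "n = a * b"
    by auto
  have "a > 1" "b \<noteq> 0" "b \<noteq> 1"
    using a assms n by (auto intro: Nat.gr0I)
  then have "a > 1" "b > 1"
    by auto
  then have "a < n" "b < n"
    using n by auto
  moreover have "n \<le> max a b ^ 2"
    using n by (simp add: power2_eq_square max_def mult_le_mono)
  ultimately show ?thesis
    using that n by (metis dvd_triv_left dvd_triv_right max_def)
qed

lemma aliquot_le_S_s: "n \<ge> 1 \<Longrightarrow> aliquot n \<le> S_s n"
  unfolding S_s_def by (rule member_le_sum[where f = aliquot, simplified]) auto

lemma sqrt_le_S_s_if_composite:
  assumes "n \<ge> 2" "\<not> prime n"
  shows "sqrt (real n) \<le> real (S_s n)"
proof -
  obtain d where d: "d dvd n" "d < n" "n \<le> d ^ 2"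
    using composite_has_large_proper_divisor[OF assms] .
  have "sqrt (real n) \<le> sqrt (real (d ^ 2))"
    using d(3) by (intro real_sqrt_le_mono) (simp only: of_nat_le_iff)
  also have "\<dots> = real d"
    by simp
  also have "\<dots> \<le> real (aliquot n)"
    unfolding aliquot_def of_nat_le_iff
    by (rule member_le_sum[where f = id, simplified]) (use d assms in auto)
  also have "\<dots> \<le> real (S_s n)"
    using assms aliquot_le_S_s[of n] by simp
  finally show ?thesis .
qed

theorem lemma6p10:
  shows "has_density {n. n \<ge> 1 \<and> sqrt (real n) \<le> real (S_s n)} 1"
proof (rule has_density_one_if_exceptions_null)
  show "has_density (insert 1 {p. prime p}) 0"
    using has_density_primes by (rule has_density_insert)
  fix n :: nat
  assume "n \<ge> 1" "n \<notin> insert 1 {p. prime p}"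
  then show "n \<in> {n. n \<ge> 1 \<and> sqrt (real n) \<le> real (S_s n)}"
    using sqrt_le_S_s_if_composite[of n] by simp
qed

end
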